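(* Let $\alpha=(\alpha_1,\ldots,\alpha_n)$ be a composition, $\sigma\in S_n$, and $i\in\{1,\ldots,n-1\}$ with $\alpha_i=\alpha_{i+1}$. The restriction $P_i:\mathrm{NAF}(\alpha,\sigma)\times\mathrm{NAF}(\alpha,\sigma s_i)\to\mathbb{Q}(q,t)$ is a probability map, i.e. $\sum_{U\in\mathrm{NAF}(\alpha,\sigma s_i)}P_i(T,U)=1$ for every $T\in\mathrm{NAF}(\alpha,\sigma)$.
   Context: Permutations are in one-line notation; $\sigma s_i$ is $\sigma$ with the entries in positions $i,i+1$ exchanged. A composition is a sequence of nonnegative integers. The skyline diagram is $\mathrm{dg}(\alpha)=\{(j,r):1\le j\le n,\ 1\le r\le\alpha_j\}$ ($j$ = column, $r$ = row) and the augmented diagram is $\mathrm{adg}(\alpha)=\mathrm{dg}(\alpha)\cup\{(j,0):1\le j\le n\}$ (row $0$ is the basement). For $u=(j,r)\in\mathrm{dg}(\alpha)$: $\mathrm{leg}(u)=\alpha_j-r$; the left arm set is $\{(j',r-1)\in\mathrm{adg}(\alpha):j'<j,\ \alpha_{j'}<\alpha_j\}$, the right arm set is $\{(j',r)\in\mathrm{dg}(\alpha):j'>j,\ \alpha_{j'}\le\alpha_j\}$, $\mathrm{Arm}(u)$ is their union and $\mathrm{arm}(u)=|\mathrm{Arm}(u)|$. Two boxes of $\mathrm{adg}(\alpha)$ attack each other if they are in the same row, or in consecutive rows with the box in the higher row strictly to the right of the box in the lower row. A filling of shape $\alpha$ and basement $\tau\in S_n$ is a map $T:\mathrm{adg}(\alpha)\to\{1,\ldots,n\}$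 with $T(j,0)=\tau_j$; $\mathrm{F}(\alpha,\tau)$ is the set of these, and $\mathrm{NAF}(\alpha,\tau)$ the subset of non-attacking ones (attacking boxes have distinct entries). For integers $a,b$ let $\chi(a,b)=1$ if $a>b$ and $0$ otherwise, and $\chi(a,b,c)=\chi(a,b)+\chi(b,c)-\chi(a,c)$. Fix $i$ with $\alpha_i=\alpha_{i+1}$. For a filling $T$ and $0\le r\le\alpha_i$, $\mathrm{swap}_r(T)$ exchanges the entries of boxes $(i,r)$ and $(i+1,r)$, and $\Omega_{0,h}=\mathrm{swap}_h\circ\cdots\circ\mathrm{swap}_0$. For $T\in\mathrm{NAF}(\alpha,\tau)$ and $0\le r\le\alpha_i-1$, let $a=T(i,r)$, $b=T(i+1,r)$, $c=T(i,r+1)$, $d=T(i+1,r+1)$, $A=\mathrm{arm}(i+1,r+1)$, $\ell=\mathrm{leg}(i+1,r+1)$, and define $\rho_r(T)\in\mathbb{Q}(q,t)$: if $a,b,c,d$ are distinct, $\rho_r(T)=0$ when $\chi(c,d,a)=\chi(c,d,b)$ and $\rho_r(T)=1$ when $\chi(c,d,a)=\chi(d,c,b)$; if exactly three of them are distinct, then $\rho_r(T)=0$ if $b=c$, $\rho_r(T)=1$ if $b=d$, and $\rho_r(T)=t^{1-\chi(d,a,b)}\frac{1-q^{\ell+1}t^{A+1}}{1-q^{\ell+1}t^{A+2}}$ if $a=c$; if $a=c$ and $b=d$, $\rho_r(T)=1$. Also set $\rho_{\alpha_i}(T)=0$. For $T\in\mathrm{NAF}(\alpha,\tau)$ and $U\in\mathrm{F}(\alpha,\tau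 s_i)$, $P_i(T,U)=\left(\prod_{r=0}^{h-1}\rho_r(T)\right)(1-\rho_h(T))$ if $U=\Omega_{0,h}(T)$ for some $h\in\{0,\ldots,\alpha_i\}$, and $P_i(T,U)=0$ otherwise. A probability map $\mathbf{T}\times\mathbf{U}\to\mathbb{Q}(q,t)$ is a function $P$ with $\sum_{U\in\mathbf{U}}P(T,U)=1$ for all $T\in\mathbf{T}$. *)

theory Defs
  imports "HOL-Computational_Algebra.Polynomial" "HOL-Computational_Algebra.Fraction_Field"
          "HOL-Combinatorics.Permutations"
begin

text \<open>Q(q,t) is the fraction field of Q[q][t]: polynomials in t with coefficients in Q[q].\<close>
type_synonym qt = "rat poly poly fract"

definition q_var :: qt where "q_var = Fract [:[:0, 1:]:] 1"
definition t_var :: qt where "t_var = Fract [:0, 1:] 1"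

text \<open>Boxes are pairs (column j, row r). A composition of length n is alpha :: nat => nat,
  of which only the values at 1..n matter.\<close>

definition dg :: "nat \<Rightarrow> (nat \<Rightarrow> nat) \<Rightarrow> (nat \<times> nat) set" where
  "dg n \<alpha> = {(j, r). 1 \<le> j \<and> j \<le> n \<and> 1 \<le> r \<and> r \<le> \<alpha> j}"

definition adg :: "nat \<Rightarrow> (nat \<Rightarrow> nat) \<Rightarrow> (nat \<times> nat) set" where
  "adg n \<alpha> = dg n \<alpha> \<union> {(j, 0) | j. 1 \<le> j \<and> j \<le> n}"

definition leg :: "(nat \<Rightarrow> nat) \<Rightarrow> nat \<times> nat \<Rightarrow> nat" where
  "leg \<alpha> u = \<alpha> (fst u) - snd u"

definition Arm_set :: "nat \<Rightarrow> (nat \<Rightarrow> nat) \<Rightarrow> nat \<times> nat \<Rightarrow> (nat \<times> nat) set" where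
  "Arm_set n \<alpha> u = (case u of (j, r) \<Rightarrow>
     {(j', r') \<in> adg n \<alpha>. r' = r - 1 \<and> j' < j \<and> \<alpha> j' < \<alpha> j}
     \<union> {(j', r') \<in> dg n \<alpha>. r' = r \<and> j' > j \<and> \<alpha> j' \<le> \<alpha> j})"

definition arm :: "nat \<Rightarrow> (nat \<Rightarrow> nat) \<Rightarrow> nat \<times> nat \<Rightarrow> nat" where
  "arm n \<alpha> u = card (Arm_set n \<alpha> u)"

definition attacks :: "nat \<times> nat \<Rightarrow> nat \<times> nat \<Rightarrow> bool" where
  "attacks u v = (u \<noteq> v \<and> (snd u = snd v
      \<or> (snd u = Suc (snd v) \<and> fst u > fst v)
      \<or> (snd v = Suc (snd u) \<and> fst v > fst u)))"

text \<open>Fillings: maps adg -> {1..n}, extended by 0 outside adg (so sets of fillings are finite).\<close>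
definition fillings :: "nat \<Rightarrow> (nat \<Rightarrow> nat) \<Rightarrow> (nat \<Rightarrow> nat) \<Rightarrow> (nat \<times> nat \<Rightarrow> nat) set" where
  "fillings n \<alpha> \<tau> = {T. (\<forall>x\<in>adg n \<alpha>. T x \<in> {1..n})
      \<and> (\<forall>j. 1 \<le> j \<and> j \<le> n \<longrightarrow> T (j, 0) = \<tau> j)
      \<and> (\<forall>x. x \<notin> adg n \<alpha> \<longrightarrow> T x = 0)}"

definition NAF :: "nat \<Rightarrow> (nat \<Rightarrow> nat) \<Rightarrow> (nat \<Rightarrow> nat) \<Rightarrow> (nat \<times> nat \<Rightarrow> nat) set" where
  "NAF n \<alpha> \<tau> = {T \<in> fillings n \<alpha> \<tau>.
      \<forall>u\<in>adg n \<alpha>. \<forall>v\<in>adg n \<alpha>. attacks u v \<longrightarrow> T u \<noteq> T v}"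

definition perm_si :: "(nat \<Rightarrow> nat) \<Rightarrow> nat \<Rightarrow> nat \<Rightarrow> nat" where
  "perm_si \<sigma> i j = (if j = i then \<sigma> (Suc i) else if j = Suc i then \<sigma> i else \<sigma> j)"

definition chi :: "nat \<Rightarrow> nat \<Rightarrow> int" where
  "chi a b = (if a > b then 1 else 0)"

definition chi3 :: "nat \<Rightarrow> nat \<Rightarrow> nat \<Rightarrow> int" where
  "chi3 a b c = chi a b + chi b c - chi a c"

definition swap_row :: "nat \<Rightarrow> nat \<Rightarrow> (nat \<times> nat \<Rightarrow> nat) \<Rightarrow> (nat \<times> nat \<Rightarrow> nat)" where
  "swap_row i r T = T((i, r) := T (Suc i, r), (Suc i, r) := T (i, r))"

fun Omega :: "nat \<Rightarrow> nat \<Rightarrow> (nat \<times> nat \<Rightarrow> nat) \<Rightarrow> (nat \<times> nat \<Rightarrow> nat)" where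
  "Omega i 0 T = swap_row i 0 T"
| "Omega i (Suc h) T = swap_row i (Suc h) (Omega i h T)"

definition rho :: "nat \<Rightarrow> (nat \<Rightarrow> nat) \<Rightarrow> nat \<Rightarrow> nat \<Rightarrow> (nat \<times> nat \<Rightarrow> nat) \<Rightarrow> qt" where
  "rho n \<alpha> i r T =
    (if r = \<alpha> i then 0 else
     (let a = T (i, r); b = T (Suc i, r); c = T (i, Suc r); d = T (Suc i, Suc r);
          A = arm n \<alpha> (Suc i, Suc r); lg = leg \<alpha> (Suc i, Suc r)
      in if card {a, b, c, d} = 4 then
           (if chi3 c d a = chi3 c d b then 0
            else if chi3 c d a = chi3 d c b then 1 else undefined)
         else if card {a, b, c, d} = 3 then
           (if b = c then 0
            else if b = d then 1
            else if a = c then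
              power_int t_var (1 - chi3 d a b) *
              (1 - q_var ^ (lg + 1) * t_var ^ (A + 1)) /
              (1 - q_var ^ (lg + 1) * t_var ^ (A + 2))
            else undefined)
         else if a = c \<and> b = d then 1
         else undefined))"

definition P_i :: "nat \<Rightarrow> (nat \<Rightarrow> nat) \<Rightarrow> nat \<Rightarrow> (nat \<times> nat \<Rightarrow> nat) \<Rightarrow> (nat \<times> nat \<Rightarrow> nat) \<Rightarrow> qt" where
  "P_i n \<alpha> i T U =
    (if \<exists>h. h \<le> \<alpha> i \<and> U = Omega i h T then
       (let h = (THE h. h \<le> \<alpha> i \<and> U = Omega i h T)
        in (\<Prod>r<h. rho n \<alpha> i r T) * (1 - rho n \<alpha> i h T))
     else 0)"

end

theory Submission
  imports Defs
begin

(* Omega_{0,h} relabels the boxes of the augmented diagram by the involution that swaps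
   columns i and i+1 in rows 0..h. It can only destroy non-attacking pairs of the form
   (i+1, r+1), (i, r) with r <= h, whose new entries are b, c (for r < h) resp. b, d
   (for r = h) in the notation of rho_r. Since rho_r = 0 when b = c and rho_h = 1 when b = d,
   every Omega_{0,h}(T) of nonzero weight is non-attacking; and the Omega_{0,h}(T) with
   h <= alpha_i are pairwise distinct, as row h of column i distinguishes Omega_{0,h}(T)
   from Omega_{0,h'}(T) for h' < h. Hence the sum is sum_{h <= alpha_i} of
   prod_{r<h} rho_r (1 - rho_h), which telescopes to 1 - prod_{r <= alpha_i} rho_r = 1
   because rho_{alpha_i} = 0. *)

definition swap_cols_upto :: "nat \<Rightarrow> nat \<Rightarrow> nat \<times> nat \<Rightarrow> nat \<times> nat" where
  "swap_cols_upto i h u = (if snd u \<le> h then transpose i (Suc i) (fst u) else fst u, snd u)"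

lemma Omega_eq_comp: "Omega i h T = T \<circ> swap_cols_upto i h"
  by (induction h) (auto simp: swap_row_def swap_cols_upto_def transpose_def fun_eq_iff)

lemma swap_cols_upto_involutory [simp]: "swap_cols_upto i h (swap_cols_upto i h u) = u"
  by (simp add: swap_cols_upto_def)

lemma swap_cols_upto_in_adg_iff:
  assumes "\<alpha> i = \<alpha> (Suc i)" "1 \<le> i" "i < n"
  shows "swap_cols_upto i h u \<in> adg n \<alpha> \<longleftrightarrow> u \<in> adg n \<alpha>"
proof -
  have *: "swap_cols_upto i h v \<in> adg n \<alpha>" if "v \<in> adg n \<alpha>" for v
    using assms that by (cases v) (auto simp: swap_cols_upto_def transpose_def adg_def dg_def)
  show ?thesis using *[of u] *[of "swap_cols_upto i h u"] by auto
qed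

lemma attacks_swap_cols_upto:
  assumes "attacks u v" "\<not> attacks (swap_cols_upto i h u) (swap_cols_upto i h v)"
  obtains r where "r \<le> h" "{u, v} = {(Suc i, Suc r), (i, r)}"
proof -
  have "swap_cols_upto i h u \<noteq> swap_cols_upto i h v"
    using assms(1) swap_cols_upto_involutory unfolding attacks_def by metis
  with assms have "\<exists>r\<le>h. {u, v} = {(Suc i, Suc r), (i, r)}"
    by (cases u; cases v)
      (auto simp: attacks_def swap_cols_upto_def transpose_def insert_commute split: if_splits;
       blast dest: Suc_leD)
  with that show ?thesis by blast
qed

lemma finite_adg: "finite (adg n \<alpha>)"
proof (rule finite_subset)
  show "adg n \<alpha> \<subseteq> (SIGMA j:{1..n}. {0..\<alpha> j})" by (auto simp: adg_def dg_def)
qed auto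

lemma finite_fillings: "finite (fillings n \<alpha> \<tau>)"
proof (rule finite_subset)
  show "fillings n \<alpha> \<tau> \<subseteq>
      {T. \<forall>x. (x \<in> adg n \<alpha> \<longrightarrow> T x \<in> {1..n}) \<and> (x \<notin> adg n \<alpha> \<longrightarrow> T x = 0)}"
    by (auto simp: fillings_def)
qed (intro finite_set_of_finite_funs finite_adg finite_atLeastAtMost)

lemma finite_NAF: "finite (NAF n \<alpha> \<tau>)"
  using finite_fillings by (rule rev_finite_subset) (auto simp: NAF_def)

lemma perm_si_eq_comp: "perm_si \<sigma> i = \<sigma> \<circ> transpose i (Suc i)"
  by (simp add: fun_eq_iff perm_si_def transpose_def)

lemma Omega_in_fillings:
  assumes "\<alpha> i = \<alpha> (Suc i)" "1 \<le> i" "i < n" and T: "T \<in> fillings n \<alpha> \<sigma>"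
  shows "Omega i h T \<in> fillings n \<alpha> (perm_si \<sigma> i)"
  unfolding fillings_def Omega_eq_comp comp_def
proof (intro CollectI conjI ballI allI impI)
  fix u assume "u \<in> adg n \<alpha>"
  with T swap_cols_upto_in_adg_iff[OF assms(1-3)] show "T (swap_cols_upto i h u) \<in> {1..n}"
    by (simp add: fillings_def)
next
  fix j assume "1 \<le> j \<and> j \<le> n"
  with assms(2,3) have "1 \<le> transpose i (Suc i) j \<and> transpose i (Suc i) j \<le> n"
    by (auto simp: transpose_def)
  with T show "T (swap_cols_upto i h (j, 0)) = perm_si \<sigma> i j"
    by (simp add: fillings_def swap_cols_upto_def perm_si_eq_comp)
next
  fix u assume "u \<notin> adg n \<alpha>"
  then have "swap_cols_upto i h u \<notin> adg n \<alpha>"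
    using swap_cols_upto_in_adg_iff[OF assms(1-3)] by blast
  with T show "T (swap_cols_upto i h u) = 0" unfolding fillings_def by blast
qed

lemma NAF_attacks_neq:
  "T \<in> NAF n \<alpha> \<tau> \<Longrightarrow> u \<in> adg n \<alpha> \<Longrightarrow> v \<in> adg n \<alpha> \<Longrightarrow> attacks u v \<Longrightarrow> T u \<noteq> T v"
  unfolding NAF_def by blast

lemma NAF_adjacent_columns_neq:
  assumes "T \<in> NAF n \<alpha> \<tau>" "1 \<le> i" "i < n" "\<alpha> i = \<alpha> (Suc i)" "r < \<alpha> i"
  shows "T (i, r) \<noteq> T (Suc i, r)" "T (i, Suc r) \<noteq> T (Suc i, Suc r)"
    and "T (i, r) \<noteq> T (Suc i, Suc r)"
proof -
  have adg: "(i, r) \<in> adg n \<alpha>" "(Suc i, r) \<in> adg n \<alpha>"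
    "(i, Suc r) \<in> adg n \<alpha>" "(Suc i, Suc r) \<in> adg n \<alpha>"
    using assms by (auto simp: adg_def dg_def)
  show "T (i, r) \<noteq> T (Suc i, r)" "T (i, Suc r) \<noteq> T (Suc i, Suc r)"
    and "T (i, r) \<noteq> T (Suc i, Suc r)"
    by (rule NAF_attacks_neq[OF assms(1) adg(1,2)] NAF_attacks_neq[OF assms(1) adg(3,4)]
        NAF_attacks_neq[OF assms(1) adg(1,4)], simp add: attacks_def)+
qed

lemma rho_eq_0_if_antidiagonal_eq:
  assumes "T \<in> NAF n \<alpha> \<tau>" "1 \<le> i" "i < n" "\<alpha> i = \<alpha> (Suc i)" "r < \<alpha> i"
    and "T (Suc i, r) = T (i, Suc r)"
  shows "rho n \<alpha> i r T = 0"
proof -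
  note neq = NAF_adjacent_columns_neq[OF assms(1-5)]
  have "card {T (i, r), T (Suc i, r), T (i, Suc r), T (Suc i, Suc r)} = 3"
    using neq assms(6) by (simp add: card_insert_if)
  with assms(5,6) show ?thesis by (simp add: rho_def Let_def)
qed

lemma rho_eq_1_if_vertical_eq:
  assumes "T \<in> NAF n \<alpha> \<tau>" "1 \<le> i" "i < n" "\<alpha> i = \<alpha> (Suc i)" "r < \<alpha> i"
    and "T (Suc i, r) = T (Suc i, Suc r)"
  shows "rho n \<alpha> i r T = 1"
proof -
  note neq = NAF_adjacent_columns_neq[OF assms(1-5)]
  show ?thesis
  proof (cases "T (i, r) = T (i, Suc r)")
    case True
    then have "card {T (i, r), T (Suc i, r), T (i, Suc r), T (Suc i, Suc r)} = 2"
      using neq assms(6) by (simp add: card_insert_if)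
    with True assms(5,6) show ?thesis by (simp add: rho_def Let_def)
  next
    case False
    then have "card {T (i, r), T (Suc i, r), T (i, Suc r), T (Suc i, Suc r)} = 3"
      using neq assms(6) by (simp add: card_insert_if)
    with False neq assms(5,6) show ?thesis by (simp add: rho_def Let_def)
  qed
qed

lemma Omega_inj_on:
  assumes "T \<in> NAF n \<alpha> \<tau>" "1 \<le> i" "i < n" "\<alpha> i = \<alpha> (Suc i)"
  shows "inj_on (\<lambda>h. Omega i h T) {..\<alpha> i}"
proof -
  have "Omega i h T \<noteq> Omega i h' T" if "h < h'" "h' \<le> \<alpha> i" for h h'
  proof -
    have "(i, h') \<in> adg n \<alpha>" "(Suc i, h') \<in> adg n \<alpha>"
      using assms that by (auto simp: adg_def dg_def)
    then have "T (i, h') \<noteq> T (Suc i, h')"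
      using NAF_attacks_neq[OF assms(1)] by (simp add: attacks_def)
    moreover have "Omega i h T (i, h') = T (i, h')" "Omega i h' T (i, h') = T (Suc i, h')"
      using that(1) by (simp_all add: Omega_eq_comp swap_cols_upto_def)
    ultimately show ?thesis by metis
  qed
  then show ?thesis
    by (intro inj_onI) (metis atMost_iff linorder_neqE_nat)
qed

lemma Omega_in_NAF:
  assumes "\<alpha> i = \<alpha> (Suc i)" "1 \<le> i" "i < n" "T \<in> NAF n \<alpha> \<sigma>" "h \<le> \<alpha> i"
    and antidiagonal: "\<And>r. r < h \<Longrightarrow> T (Suc i, r) \<noteq> T (i, Suc r)"
    and vertical: "h < \<alpha> i \<Longrightarrow> T (Suc i, h) \<noteq> T (Suc i, Suc h)"
  shows "Omega i h T \<in> NAF n \<alpha> (perm_si \<sigma> i)"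
proof -
  let ?\<phi> = "swap_cols_upto i h"
  note adg_iff = swap_cols_upto_in_adg_iff[OF assms(1-3)]
  have fill: "Omega i h T \<in> fillings n \<alpha> (perm_si \<sigma> i)"
    using assms(1-4) by (intro Omega_in_fillings) (simp_all add: NAF_def)
  have broken: "T (?\<phi> (Suc i, Suc r)) \<noteq> T (?\<phi> (i, r))" if "r \<le> h" "Suc r \<le> \<alpha> i" for r
  proof (cases "r < h")
    case True
    with antidiagonal[OF True] show ?thesis by (simp add: swap_cols_upto_def)
  next
    case False
    with that vertical show ?thesis by (simp add: swap_cols_upto_def)
  qed
  have "Omega i h T u \<noteq> Omega i h T v"
    if uv: "u \<in> adg n \<alpha>" "v \<in> adg n \<alpha>" "attacks u v" for u v
  proof (cases "attacks (?\<phi> u) (?\<phi> v)")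
    case True
    moreover have "?\<phi> u \<in> adg n \<alpha>" "?\<phi> v \<in> adg n \<alpha>"
      using uv adg_iff by simp_all
    ultimately show ?thesis
      using NAF_attacks_neq[OF assms(4)] by (simp add: Omega_eq_comp)
  next
    case False
    then obtain r where r: "r \<le> h" "{u, v} = {(Suc i, Suc r), (i, r)}"
      using attacks_swap_cols_upto[OF uv(3)] by blast
    then have "Suc r \<le> \<alpha> i"
      using uv(1,2) assms(1) by (auto simp: doubleton_eq_iff adg_def dg_def)
    with r broken show ?thesis unfolding Omega_eq_comp comp_def doubleton_eq_iff by metis
  qed
  with fill show ?thesis by (simp add: NAF_def)
qed

definition Omega_weight ::
  "nat \<Rightarrow> (nat \<Rightarrow> nat) \<Rightarrow> nat \<Rightarrow> (nat \<times> nat \<Rightarrow> nat) \<Rightarrow> nat \<Rightarrow> qt" where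
  "Omega_weight n \<alpha> i T h = (\<Prod>r<h. rho n \<alpha> i r T) * (1 - rho n \<alpha> i h T)"

lemma P_i_Omega:
  assumes "T \<in> NAF n \<alpha> \<tau>" "1 \<le> i" "i < n" "\<alpha> i = \<alpha> (Suc i)" "h \<le> \<alpha> i"
  shows "P_i n \<alpha> i T (Omega i h T) = Omega_weight n \<alpha> i T h"
proof -
  have "(THE h'. h' \<le> \<alpha> i \<and> Omega i h T = Omega i h' T) = h"
    using Omega_inj_on[OF assms(1-4)] assms(5) by (auto simp: inj_on_def)
  with assms(5) show ?thesis by (auto simp: P_i_def Omega_weight_def)
qed

lemma P_i_eq_0:
  "U \<notin> (\<lambda>h. Omega i h T) ` {..\<alpha> i} \<Longrightarrow> P_i n \<alpha> i T U = 0"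
  by (auto simp: P_i_def)

lemma Omega_in_NAF_if_weight_neq_0:
  assumes "\<alpha> i = \<alpha> (Suc i)" "1 \<le> i" "i < n" "T \<in> NAF n \<alpha> \<sigma>" "h \<le> \<alpha> i"
    and "Omega_weight n \<alpha> i T h \<noteq> 0"
  shows "Omega i h T \<in> NAF n \<alpha> (perm_si \<sigma> i)"
proof (rule Omega_in_NAF[OF assms(1-5)])
  fix r assume "r < h"
  moreover have "rho n \<alpha> i r T \<noteq> 0"
    using assms(6) \<open>r < h\<close> by (auto simp: Omega_weight_def)
  ultimately show "T (Suc i, r) \<noteq> T (i, Suc r)"
    using rho_eq_0_if_antidiagonal_eq[OF assms(4,2,3,1)] assms(5) by fastforce
next
  assume "h < \<alpha> i"
  moreover have "rho n \<alpha> i h T \<noteq> 1"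
    using assms(6) by (auto simp: Omega_weight_def)
  ultimately show "T (Suc i, h) \<noteq> T (Suc i, Suc h)"
    using rho_eq_1_if_vertical_eq[OF assms(4,2,3,1)] by blast
qed

lemma sum_prod_telescope:
  fixes f :: "nat \<Rightarrow> 'a::comm_ring_1"
  shows "(\<Sum>h\<le>m. (\<Prod>r<h. f r) * (1 - f h)) = 1 - (\<Prod>r\<le>m. f r)"
  by (induction m) (auto simp: algebra_simps lessThan_Suc_atMost[symmetric])

lemma sum_Omega_weight: "(\<Sum>h\<le>\<alpha> i. Omega_weight n \<alpha> i T h) = 1"
proof -
  have "(\<Sum>h\<le>\<alpha> i. Omega_weight n \<alpha> i T h) = 1 - (\<Prod>r\<le>\<alpha> i. rho n \<alpha> i r T)"
    unfolding Omega_weight_def by (rule sum_prod_telescope)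
  also have "(\<Prod>r\<le>\<alpha> i. rho n \<alpha> i r T) = 0"
    by (rule prod_zero) (auto simp: rho_def)
  finally show ?thesis by simp
qed

theorem corollary3p7:
  fixes n i :: nat and \<alpha> \<sigma> :: "nat \<Rightarrow> nat"
  assumes "\<sigma> permutes {1..n}"
    and "1 \<le> i" and "i < n"
    and "\<alpha> i = \<alpha> (Suc i)"
    and "T \<in> NAF n \<alpha> \<sigma>"
  shows "(\<Sum>U\<in>NAF n \<alpha> (perm_si \<sigma> i). P_i n \<alpha> i T U) = 1"
proof -
  let ?\<Omega> = "\<lambda>h. Omega i h T"
  have "(\<Sum>U\<in>NAF n \<alpha> (perm_si \<sigma> i). P_i n \<alpha> i T U) = (\<Sum>U\<in>?\<Omega> ` {..\<alpha> i}. P_i n \<alpha> i T U)"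
  proof (rule sum.mono_neutral_cong)
    fix U assume "U \<in> ?\<Omega> ` {..\<alpha> i} - NAF n \<alpha> (perm_si \<sigma> i)"
    then obtain h where "h \<le> \<alpha> i" "U = ?\<Omega> h" "?\<Omega> h \<notin> NAF n \<alpha> (perm_si \<sigma> i)" by auto
    with Omega_in_NAF_if_weight_neq_0[OF assms(4,2,3,5)] P_i_Omega[OF assms(5,2-4)]
    show "P_i n \<alpha> i T U = 0" by metis
  qed (auto simp: finite_NAF P_i_eq_0)
  also have "\<dots> = (\<Sum>h\<le>\<alpha> i. Omega_weight n \<alpha> i T h)"
    using Omega_inj_on[OF assms(5,2-4)] by (simp add: sum.reindex P_i_Omega[OF assms(5,2-4)])
  also have "\<dots> = 1" by (rule sum_Omega_weight)
  finally show ?thesis .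
qed

end
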